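(* Let $\tau:\mathbb N\to\mathbb N$ be defined by $\tau(n)=\lfloor\varphi n+1\rfloor$ if $n\in R_{2,0}$, $\tau(n)=\lfloor\varphi n-1\rfloor$ if $n\in R_{1,0}$, and $\tau(n)=\lfloor(\varphi-1)n+1\rfloor$ if $n\in R_{1,1}$. Then for every integer $n\geq 1$, $\tau^n(3)=F(n+3)+2$.
   Context: $\mathbb N=\{1,2,\dots\}$, $\varphi=\frac{1+\sqrt5}{2}$, $F$ the Fibonacci sequence with $F(0)=0$, $F(1)=F(2)=1$, $F(n)=F(n-1)+F(n-2)$. For $i\in\mathbb Z^{\ge0},j\in\mathbb Z$, $R_{i,j}$ is the range of $n\mapsto F(i+1)\lfloor n\varphi\rfloor+F(i)n-j$, $n\in\mathbb N$; the sets $R_{2,0},R_{1,0},R_{1,1}$ partition $\mathbb N$. $\tau^n$ denotes the $n$-fold composition. *)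

theory Defs
  imports Complex_Main "HOL-Number_Theory.Fib"
begin

definition phi :: real where "phi = (1 + sqrt 5) / 2"

definition R :: "nat \<Rightarrow> int \<Rightarrow> int set" where
  "R i j = {int (fib (i+1)) * \<lfloor>real n * phi\<rfloor> + int (fib i) * int n - j | n :: nat. n \<ge> 1}"

text \<open>The map tau on positive integers; its value at 0 (outside N) is irrelevant, set to 0.\<close>
definition tau :: "nat \<Rightarrow> nat" where
  "tau n = (if int n \<in> R 2 0 then nat \<lfloor>phi * real n + 1\<rfloor>
            else if int n \<in> R 1 0 then nat \<lfloor>phi * real n - 1\<rfloor>
            else if int n \<in> R 1 1 then nat \<lfloor>(phi - 1) * real n + 1\<rfloor>
            else 0)"

end

theory Submission
  imports Defs "HOL-Computational_Algebra.Primes"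
begin

(* Since phi F(j) - F(j+1) = -(1 - phi)^j is tiny, F(k) + 2 = floor(m phi) + m with m = F(k-2) + 1,
   so F(k) + 2 lies in R_{1,0} for k >= 4, and tau acts on it as n -> floor(phi n - 1), which gives
   F(k+1) + 2.  This needs F(k) + 2 not to lie in R_{2,0}: R_{1,0} is the upper Wythoff sequence
   floor(n phi^2), whereas 2 floor(m phi) + m = floor((floor(m phi) + m) phi) lies in the lower one,
   and the two are disjoint by Beatty's theorem since 1/phi + 1/phi^2 = 1.  The orbit starts with
   tau(3) = 5 = F(4) + 2 because 3 = 2 floor(phi) + 1 lies in R_{2,0}. *)

lemma sqrt_prime_irrational:
  fixes p :: nat
  assumes "prime p"
  shows "sqrt p \<notin> \<rat>"
proof
  assume "sqrt p \<in> \<rat>"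
  then obtain m n :: nat where "n \<noteq> 0" "\<bar>sqrt p\<bar> = m / n"
    by (rule Rats_abs_nat_div_natE)
  then have "real m = real n * sqrt p"
    by (simp add: field_simps)
  then have "real (m ^ 2) = real (p * n ^ 2)"
    by (simp add: power_mult_distrib)
  then have eq: "m ^ 2 = p * n ^ 2"
    by (simp only: of_nat_eq_iff)
  have "m ^ 2 \<noteq> 0" using eq \<open>n \<noteq> 0\<close> prime_gt_0_nat[OF assms] by simp
  then have "m \<noteq> 0" by simp
  have "multiplicity p (m ^ 2) = 2 * multiplicity p m"
    using assms \<open>m \<noteq> 0\<close> by (simp add: prime_elem_multiplicity_power_distrib)
  moreover have "multiplicity p (p * n ^ 2) = Suc (2 * multiplicity p n)"
    using assms \<open>n \<noteq> 0\<close>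
    by (simp add: prime_elem_multiplicity_mult_distrib prime_elem_multiplicity_power_distrib multiplicity_self)
  ultimately have "2 * multiplicity p m = Suc (2 * multiplicity p n)"
    using eq by metis
  then show False by presburger
qed

lemma phi_irrational: "phi \<notin> \<rat>"
proof
  assume "phi \<in> \<rat>"
  then have "2 * phi - 1 \<in> \<rat>" by simp
  moreover have "2 * phi - 1 = sqrt (real 5)" by (simp add: phi_def field_simps)
  moreover have "prime (5 :: nat)" by (simp add: prime_nat_iff' atLeastLessThan_nat_numeral)
  ultimately show False using sqrt_prime_irrational by metis
qed

lemma phi_squared: "phi ^ 2 = phi + 1"
  by (simp add: phi_def power2_eq_square field_simps)

lemma phi_mult_phi_mult: "phi * (phi * x) = x + phi * x"
  using phi_squared by (simp add: power2_eq_square algebra_simps flip: mult.assoc)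

lemma phi_bounds: "8/5 < phi" "phi < 5/3"
proof -
  have "11/5 < sqrt 5" by (rule real_less_rsqrt) (simp add: power2_eq_square)
  then show "8/5 < phi" by (simp add: phi_def)
  have "sqrt 5 < sqrt ((7/3)^2)" by (rule real_sqrt_less_mono) (simp add: power2_eq_square)
  then have "sqrt 5 < 7/3" by simp
  then show "phi < 5/3" by (simp add: phi_def)
qed

lemma floor_less_of_irrational:
  fixes y :: real
  assumes "y \<notin> \<rat>"
  shows "of_int \<lfloor>y\<rfloor> < y" "y < of_int \<lfloor>y\<rfloor> + 1"
proof -
  have "y \<noteq> of_int \<lfloor>y\<rfloor>" using assms by (metis Rats_of_int)
  then show "of_int \<lfloor>y\<rfloor> < y" using of_int_floor_le[of y] by linarith
  show "y < of_int \<lfloor>y\<rfloor> + 1" by linarith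
qed

lemma Beatty_floor_neq:
  fixes \<alpha> \<beta> :: real and k q :: int
  assumes "\<alpha> \<notin> \<rat>" "\<alpha> > 0" "\<beta> > 0" and reciprocals: "1 / \<alpha> + 1 / \<beta> = 1"
    and "k \<noteq> 0" "q \<noteq> 0"
  shows "\<lfloor>k * \<alpha>\<rfloor> \<noteq> \<lfloor>q * \<beta>\<rfloor>"
proof
  assume floor_eq: "\<lfloor>k * \<alpha>\<rfloor> = \<lfloor>q * \<beta>\<rfloor>"
  define x where "x = \<lfloor>k * \<alpha>\<rfloor>"
  have "\<beta> \<notin> \<rat>"
  proof
    assume "\<beta> \<in> \<rat>"
    then have "1 - 1 / \<beta> \<in> \<rat>" by simp
    moreover have "1 - 1 / \<beta> = inverse \<alpha>" using reciprocals by (simp add: inverse_eq_divide)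
    ultimately show False using assms(1) by simp
  qed
  then have "k * \<alpha> \<notin> \<rat>" "q * \<beta> \<notin> \<rat>"
    using assms(1,5,6) by (simp_all add: Rats_mult_iff)
  then have "x < k * \<alpha>" "k * \<alpha> < real_of_int x + 1" "x < q * \<beta>" "q * \<beta> < real_of_int x + 1"
    using floor_less_of_irrational floor_eq unfolding x_def by metis+
  then have "x / \<alpha> < k" "k < (real_of_int x + 1) / \<alpha>" "x / \<beta> < q" "q < (real_of_int x + 1) / \<beta>"
    using assms(2,3) by (simp_all add: field_simps)
  moreover have split: "y / \<alpha> + y / \<beta> = y" for y :: real
  proof -
    have "y / \<alpha> + y / \<beta> = y * (1 / \<alpha> + 1 / \<beta>)" by (simp add: distrib_left)
    then show ?thesis using reciprocals by simp
  qed
  ultimately have "real_of_int x < of_int (k + q)" "of_int (k + q) < real_of_int x + 1"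
    unfolding of_int_add using split[of x] split[of "real_of_int x + 1"] by linarith+
  then have "x < k + q" "k + q < x + 1" by simp_all
  then show False by linarith
qed

lemma floor_mult_phi_squared: "\<lfloor>real n * phi ^ 2\<rfloor> = \<lfloor>real n * phi\<rfloor> + int n"
proof -
  have "real n * phi ^ 2 = real n * phi + of_int (int n)"
    by (simp add: phi_squared algebra_simps)
  then show ?thesis by simp
qed

lemma floor_floor_mult_phi_mult_phi:
  "\<lfloor>(\<lfloor>real n * phi\<rfloor> + real n) * phi\<rfloor> = 2 * \<lfloor>real n * phi\<rfloor> + int n"
proof (rule floor_unique)
  define a where "a = \<lfloor>real n * phi\<rfloor>"
  define f where "f = real n * phi - a"
  have "0 \<le> f" "f < 1" unfolding f_def a_def by linarith+
  then have "0 \<le> f * (2 - phi)" "f * (2 - phi) < 1"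
    using phi_bounds by (auto intro: mult_nonneg_nonneg mult_less_le_imp_less[of f 1 "2 - phi" 1, simplified])
  moreover have "(a + real n) * phi = 2 * a + real n + f * (2 - phi)"
  proof -
    have "real n * phi * phi = real n * phi + real n"
      using phi_mult_phi_mult[of "real n"] by (simp add: ac_simps)
    then show ?thesis unfolding f_def by (simp add: algebra_simps)
  qed
  ultimately show "of_int (2 * a + int n) \<le> (a + real n) * phi"
    "(a + real n) * phi < of_int (2 * a + int n) + 1"
    by simp_all
qed

lemma mem_R_2_0: "x \<in> R 2 0 \<longleftrightarrow> (\<exists>n::nat. n \<ge> 1 \<and> x = 2 * \<lfloor>real n * phi\<rfloor> + int n)"
  unfolding R_def by (auto simp: numeral_eq_Suc)

lemma mem_R_1_0: "x \<in> R 1 0 \<longleftrightarrow> (\<exists>n::nat. n \<ge> 1 \<and> x = \<lfloor>real n * phi\<rfloor> + int n)"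
  unfolding R_def by (auto simp: numeral_eq_Suc)

lemma R_2_0_disjoint_R_1_0: "R 2 0 \<inter> R 1 0 = {}"
proof (intro equals0I)
  fix x assume "x \<in> R 2 0 \<inter> R 1 0"
  then obtain m q :: nat where "m \<ge> 1" "x = 2 * \<lfloor>real m * phi\<rfloor> + int m"
    and "q \<ge> 1" "x = \<lfloor>real q * phi\<rfloor> + int q"
    using mem_R_2_0 mem_R_1_0 by (metis IntE)
  define k where "k = \<lfloor>real m * phi\<rfloor> + int m"
  have "0 \<le> \<lfloor>real m * phi\<rfloor>" using phi_bounds by simp
  then have "k \<noteq> 0" using \<open>m \<ge> 1\<close> unfolding k_def by linarith
  have floor_eq: "\<lfloor>real_of_int k * phi\<rfloor> = \<lfloor>real_of_int (int q) * phi ^ 2\<rfloor>"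
    using \<open>x = 2 * _ + _\<close> \<open>x = \<lfloor>real q * phi\<rfloor> + _\<close>
    by (simp add: k_def floor_floor_mult_phi_mult_phi floor_mult_phi_squared)
  have reciprocals: "1 / phi + 1 / phi ^ 2 = 1"
  proof -
    have "1 / phi + 1 / phi ^ 2 = (phi + 1) / phi ^ 2"
      using phi_bounds by (simp add: field_simps power2_eq_square)
    then show ?thesis using phi_squared phi_bounds by simp
  qed
  have "\<lfloor>real_of_int k * phi\<rfloor> \<noteq> \<lfloor>real_of_int (int q) * phi ^ 2\<rfloor>"
    by (rule Beatty_floor_neq[OF phi_irrational _ _ reciprocals \<open>k \<noteq> 0\<close>])
      (use phi_bounds \<open>q \<ge> 1\<close> in auto)
  then show False using floor_eq by contradiction
qed

lemma phi_mult_fib_diff_fib_Suc: "phi * fib j - fib (Suc j) = - ((1 - phi) ^ j)"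
proof (induction j)
  case (Suc j)
  have "phi * fib (Suc j) - fib (Suc (Suc j)) = (1 - phi) * (phi * fib j - fib (Suc j))"
    by (simp add: algebra_simps phi_mult_phi_mult)
  then show ?case using Suc.IH by simp
qed simp

lemma phi_mult_fib_diff_bounds:
  assumes "j \<ge> 2"
  shows "phi - 2 \<le> phi * fib j - fib (Suc j)" "phi * fib j - fib (Suc j) < 2 - phi"
proof -
  define c where "c = (1 - phi) ^ (j - 2)"
  have "\<bar>1 - phi\<bar> < 1" using phi_bounds by simp
  have "\<bar>c\<bar> \<le> 1"
    unfolding c_def power_abs using \<open>\<bar>1 - phi\<bar> < 1\<close> by (intro power_le_one) auto
  then have "c \<le> 1" by simp
  have "-1 < c"
  proof (cases "j = 2")
    case False
    then have "\<bar>c\<bar> \<le> \<bar>1 - phi\<bar> ^ 1"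
      unfolding c_def power_abs using assms phi_bounds by (intro power_decreasing) auto
    then show ?thesis using \<open>\<bar>1 - phi\<bar> < 1\<close> by simp
  qed (simp add: c_def)
  have "(1 - phi) ^ j = (1 - phi) ^ (2 + (j - 2))"
    using assms by (simp only: le_add_diff_inverse)
  also have "\<dots> = (1 - phi) ^ 2 * c"
    unfolding c_def by (rule power_add)
  also have "(1 - phi) ^ 2 = 2 - phi"
    using phi_squared by (simp add: power2_diff)
  finally have "phi * fib j - fib (Suc j) = - ((2 - phi) * c)"
    by (simp add: phi_mult_fib_diff_fib_Suc)
  moreover have "(2 - phi) * c \<le> (2 - phi) * 1"
    using \<open>c \<le> 1\<close> phi_bounds by (intro mult_left_mono) auto
  moreover have "(2 - phi) * (- 1) < (2 - phi) * c"
    using \<open>-1 < c\<close> phi_bounds by (intro mult_strict_left_mono) auto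
  ultimately show "phi - 2 \<le> phi * fib j - fib (Suc j)" "phi * fib j - fib (Suc j) < 2 - phi"
    by simp_all
qed

lemma phi_mult_fib_diff_abs_le:
  assumes "j \<ge> 4"
  shows "\<bar>phi * fib j - fib (Suc j)\<bar> \<le> 5 - 3 * phi"
proof -
  have "\<bar>phi * fib j - fib (Suc j)\<bar> = \<bar>1 - phi\<bar> ^ j"
    by (simp add: phi_mult_fib_diff_fib_Suc power_abs)
  also have "\<dots> \<le> \<bar>1 - phi\<bar> ^ 4"
    using assms phi_bounds by (intro power_decreasing) auto
  also have "\<bar>1 - phi\<bar> ^ 4 = ((1 - phi) ^ 2) ^ 2"
    by (simp flip: power_mult add: power_even_abs)
  also have "\<dots> = 5 - 3 * phi"
    using phi_squared by (simp add: power2_diff algebra_simps)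
  finally show ?thesis .
qed

lemma fib_plus_2_mem_R_1_0:
  assumes "k \<ge> 4"
  shows "int (fib k + 2) \<in> R 1 0"
proof -
  define j where "j = k - 2"
  have j: "k = j + 2" "j \<ge> 2" using assms by (simp_all add: j_def)
  define m where "m = fib j + 1"
  have "\<lfloor>real m * phi\<rfloor> = int (fib (Suc j)) + 1"
  proof (rule floor_unique)
    have "real m * phi = fib (Suc j) + 1 + ((phi * fib j - fib (Suc j)) + phi - 1)"
      by (simp add: m_def algebra_simps)
    then show "of_int (int (fib (Suc j)) + 1) \<le> real m * phi"
      "real m * phi < of_int (int (fib (Suc j)) + 1) + 1"
      using phi_mult_fib_diff_bounds[OF \<open>j \<ge> 2\<close>] phi_bounds by simp_all
  qed
  then have "int (fib k + 2) = \<lfloor>real m * phi\<rfloor> + int m"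
    using j by (simp add: m_def)
  then show ?thesis unfolding mem_R_1_0 m_def by auto
qed

lemma tau_fib_plus_2:
  assumes "k \<ge> 4"
  shows "tau (fib k + 2) = fib (Suc k) + 2"
proof -
  have in_R_1_0: "int (fib k + 2) \<in> R 1 0"
    using assms by (rule fib_plus_2_mem_R_1_0)
  then have "int (fib k + 2) \<notin> R 2 0"
    using R_2_0_disjoint_R_1_0 by blast
  moreover have "\<lfloor>phi * real (fib k + 2) - 1\<rfloor> = int (fib (Suc k)) + 2"
  proof (rule floor_unique)
    \<comment> \<open>the error term is at most 5 - 3 phi, which is below 2 phi - 3 because phi > 8/5\<close>
    have "phi * real (fib k + 2) - 1 = fib (Suc k) + 2 + ((phi * fib k - fib (Suc k)) + 2 * phi - 3)"
      by (simp add: algebra_simps)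
    then show "of_int (int (fib (Suc k)) + 2) \<le> phi * real (fib k + 2) - 1"
      "phi * real (fib k + 2) - 1 < of_int (int (fib (Suc k)) + 2) + 1"
      using phi_mult_fib_diff_abs_le[OF assms] phi_bounds by (simp_all add: abs_le_iff)
  qed
  ultimately show ?thesis
    using in_R_1_0 unfolding tau_def by simp
qed

lemma tau_3: "tau 3 = 5"
proof -
  have "\<lfloor>phi\<rfloor> = 1" using phi_bounds by (simp add: floor_eq_iff)
  then have "int 3 \<in> R 2 0"
    unfolding mem_R_2_0 by (intro exI[of _ 1]) simp
  moreover have "\<lfloor>phi * real 3 + 1\<rfloor> = 5"
    using phi_bounds by (simp add: floor_eq_iff)
  ultimately show ?thesis
    unfolding tau_def by simp
qed

theorem theorem4p7:
  fixes n :: nat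
  assumes "n \<ge> 1"
  shows "(tau ^^ n) 3 = fib (n + 3) + 2"
  using assms
proof (induction n rule: dec_induct)
  case base
  have "fib (1 + 3) = 3" by (simp add: numeral_eq_Suc)
  then show ?case using tau_3 by simp
next
  case (step n)
  then have "(tau ^^ Suc n) 3 = tau (fib (n + 3) + 2)" by simp
  also have "\<dots> = fib (Suc (n + 3)) + 2" by (rule tau_fib_plus_2) (use step.hyps in simp)
  finally show ?case by simp
qed

end
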